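(* Let $\mathcal{T}$ be a tangle of order $k$ in a connectivity system $(E,\lambda)$, and let $\mathcal{S}$ be a tree compatible set. Let $n\geq 2$, and let $\Phi=(P_1,\ldots,P_n)$ be a $k$-flower in $\mathcal{T}$. If $P_1\subseteq \mathrm{fcl}_{\mathcal{T}}(P_2)$, then the concatenation $\Phi '=(P_1\cup P_2,P_3,\ldots, P_n)$ of $\Phi$ is $\mathcal{T}$-equivalent to $\Phi$ with respect to $\mathcal{S}$.
   Context: A connectivity system is a pair $(E,\lambda)$ with $E$ finite and $\lambda$ an integer-valued symmetric submodular function on subsets of $E$. $X$ is $k$-separating if $\lambda(X)\le k$; a $k$-separation is an unordered partition $(X,E-X)$ with $\lambda(X)\le k$. A tangle of order $k$ is a collection $\mathcal T$ of subsets of $E$ with (T1) $\lambda(A)<k$ for $A\in\mathcal T$; (T2) if $\lambda(A)\le k-1$ then $A$ or $E-A$ is in $\mathcal T$; (T3) $A\cup B\cup C\ne E$ for $A,B,C\in\mathcal T$; (T4) $E-\{e\}\notin\mathcal T$. A set is $\mathcal T$-weak if contained in a member of $\mathcal T$, otherwise $\mathcal T$-strong; partitions/$k$-separations are $\mathcal T$-strong if all parts are. A $\mathcal T$-strong $k$-separating $X$ is fully closed if $X\cup Y$ is not $k$-separating for every nonempty $\mathcal T$-weak $Y\subseteq E-X$; $\mathrm{fcl}_{\mathcal T}(X)$ is the intersection of all fully closed $k$-separating sets containing $X$. $\mathcal T$-strong $k$-separations $(X,Y),(X',Y')$ are $\mathcal T$-equivalent if $\{\mathrm{fcl}_{\mathcal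 T}(X),\mathrm{fcl}_{\mathcal T}(Y)\}=\{\mathrm{fcl}_{\mathcal T}(X'),\mathrm{fcl}_{\mathcal T}(Y')\}$. $X$ is $\mathcal T$-sequential if it is $k$-separating, $E-X$ is $\mathcal T$-strong and $\mathrm{fcl}_{\mathcal T}(E-X)=E$. Let $\mathcal S$ be a set of non-$\mathcal T$-sequential $k$-separating sets with $\mathcal T$-strong complements; a $(k,\mathcal S)$-separation is a $k$-separation $(X,E-X)$ with $X,E-X\in\mathcal S$. $\mathcal S$ is tree compatible if (S1) any $\mathcal T$-strong $k$-separation $\mathcal T$-equivalent to a $(k,\mathcal S)$-separation is a $(k,\mathcal S)$-separation, and (S2) if $X\in\mathcal S$ and $(Y,E-Y)$ is a $\mathcal T$-strong $k$-separation with $X\subseteq Y$ then $Y\in\mathcal S$. A $k$-flower in $\mathcal T$ is a $\mathcal T$-strong partition $(P_1,\dots,P_n)$ of $E$ with $P_i$ and $P_i\cup P_{i+1}$ $k$-separating for all $i$ (mod $n$); it displays $(X,E-X)$ if $X$ is a union of petals. $\Phi_1\preccurlyeq_{\mathcal S}\Phi_2$ if each $(k,\mathcal S)$-separation displayed by $\Phi_1$ is $\mathcal T$-equivalent to some $(k,\mathcal S)$-separation displayed by $\Phi_2$; $\Phi_1,\Phi_2$ are $\mathcal T$-equivalent with respect to $\mathcal S$ if both $\Phi_1\preccurlyeq_{\mathcal S}\Phi_2$ and $\Phi_2\preccurlyeq_{\mathcal S}\Phi_1$. *)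

theory Defs
  imports Main
begin

definition connectivity_system :: "'a set \<Rightarrow> ('a set \<Rightarrow> int) \<Rightarrow> bool" where
  "connectivity_system E lam \<longleftrightarrow> finite E
     \<and> (\<forall>X. X \<subseteq> E \<longrightarrow> lam X = lam (E - X))
     \<and> (\<forall>X Y. X \<subseteq> E \<longrightarrow> Y \<subseteq> E \<longrightarrow> lam X + lam Y \<ge> lam (X \<union> Y) + lam (X \<inter> Y))"

definition k_separating :: "'a set \<Rightarrow> ('a set \<Rightarrow> int) \<Rightarrow> int \<Rightarrow> 'a set \<Rightarrow> bool" where
  "k_separating E lam k X \<longleftrightarrow> X \<subseteq> E \<and> lam X \<le> k"

definition tangle :: "'a set \<Rightarrow> ('a set \<Rightarrow> int) \<Rightarrow> int \<Rightarrow> 'a set set \<Rightarrow> bool" where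
  "tangle E lam k T \<longleftrightarrow> (\<forall>A\<in>T. A \<subseteq> E)
     \<and> (\<forall>A\<in>T. lam A < k)
     \<and> (\<forall>A. A \<subseteq> E \<longrightarrow> lam A \<le> k - 1 \<longrightarrow> A \<in> T \<or> E - A \<in> T)
     \<and> (\<forall>A\<in>T. \<forall>B\<in>T. \<forall>C\<in>T. A \<union> B \<union> C \<noteq> E)
     \<and> (\<forall>e\<in>E. E - {e} \<notin> T)"

definition T_weak :: "'a set set \<Rightarrow> 'a set \<Rightarrow> bool" where
  "T_weak T X \<longleftrightarrow> (\<exists>A\<in>T. X \<subseteq> A)"

definition T_strong :: "'a set set \<Rightarrow> 'a set \<Rightarrow> bool" where
  "T_strong T X \<longleftrightarrow> \<not> T_weak T X"

text \<open>A \<open>T\<close>-strong \<open>k\<close>-separation \<open>(X, E - X)\<close>, represented by the set \<open>X\<close>.\<close>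
definition strong_k_separation :: "'a set \<Rightarrow> ('a set \<Rightarrow> int) \<Rightarrow> int \<Rightarrow> 'a set set \<Rightarrow> 'a set \<Rightarrow> bool" where
  "strong_k_separation E lam k T X \<longleftrightarrow>
     k_separating E lam k X \<and> T_strong T X \<and> T_strong T (E - X)"

definition fully_closed :: "'a set \<Rightarrow> ('a set \<Rightarrow> int) \<Rightarrow> int \<Rightarrow> 'a set set \<Rightarrow> 'a set \<Rightarrow> bool" where
  "fully_closed E lam k T X \<longleftrightarrow> k_separating E lam k X \<and> T_strong T X
     \<and> (\<forall>Y. Y \<subseteq> E - X \<longrightarrow> Y \<noteq> {} \<longrightarrow> T_weak T Y \<longrightarrow> \<not> k_separating E lam k (X \<union> Y))"

text \<open>Full closure: intersection of all fully closed \<open>k\<close>-separating sets containing \<open>X\<close>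
  (taken inside \<open>E\<close>, so that an empty family gives \<open>E\<close>).\<close>
definition fcl :: "'a set \<Rightarrow> ('a set \<Rightarrow> int) \<Rightarrow> int \<Rightarrow> 'a set set \<Rightarrow> 'a set \<Rightarrow> 'a set" where
  "fcl E lam k T X = E \<inter> \<Inter> {Z. fully_closed E lam k T Z \<and> X \<subseteq> Z}"

definition T_equivalent :: "'a set \<Rightarrow> ('a set \<Rightarrow> int) \<Rightarrow> int \<Rightarrow> 'a set set \<Rightarrow> 'a set \<Rightarrow> 'a set \<Rightarrow> bool" where
  "T_equivalent E lam k T X X' \<longleftrightarrow>
     strong_k_separation E lam k T X \<and> strong_k_separation E lam k T X' \<and>
     {fcl E lam k T X, fcl E lam k T (E - X)} = {fcl E lam k T X', fcl E lam k T (E - X')}"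

definition T_sequential :: "'a set \<Rightarrow> ('a set \<Rightarrow> int) \<Rightarrow> int \<Rightarrow> 'a set set \<Rightarrow> 'a set \<Rightarrow> bool" where
  "T_sequential E lam k T X \<longleftrightarrow> k_separating E lam k X \<and> T_strong T (E - X)
     \<and> fcl E lam k T (E - X) = E"

definition admissible_S :: "'a set \<Rightarrow> ('a set \<Rightarrow> int) \<Rightarrow> int \<Rightarrow> 'a set set \<Rightarrow> 'a set set \<Rightarrow> bool" where
  "admissible_S E lam k T S \<longleftrightarrow> (\<forall>X\<in>S. k_separating E lam k X \<and> \<not> T_sequential E lam k T X
     \<and> T_strong T (E - X))"

text \<open>A \<open>(k,S)\<close>-separation \<open>(X, E - X)\<close>, represented by \<open>X\<close>.\<close>
definition kS_separation :: "'a set \<Rightarrow> ('a set \<Rightarrow> int) \<Rightarrow> int \<Rightarrow> 'a set set \<Rightarrow> 'a set \<Rightarrow> bool" where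
  "kS_separation E lam k S X \<longleftrightarrow> k_separating E lam k X \<and> X \<in> S \<and> E - X \<in> S"

definition tree_compatible :: "'a set \<Rightarrow> ('a set \<Rightarrow> int) \<Rightarrow> int \<Rightarrow> 'a set set \<Rightarrow> 'a set set \<Rightarrow> bool" where
  "tree_compatible E lam k T S \<longleftrightarrow> admissible_S E lam k T S
     \<and> (\<forall>X X'. kS_separation E lam k S X \<longrightarrow> strong_k_separation E lam k T X'
          \<longrightarrow> T_equivalent E lam k T X' X \<longrightarrow> kS_separation E lam k S X')
     \<and> (\<forall>X Y. X \<in> S \<longrightarrow> strong_k_separation E lam k T Y \<longrightarrow> X \<subseteq> Y \<longrightarrow> Y \<in> S)"

text \<open>Petals \<open>P_1,\<dots>,P_n\<close> are the list entries \<open>P ! 0, \<dots>, P ! (n-1)\<close>; indices are taken mod \<open>n\<close>.\<close>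
definition is_partition :: "'a set \<Rightarrow> 'a set list \<Rightarrow> bool" where
  "is_partition E P \<longleftrightarrow> (\<forall>i<length P. P ! i \<noteq> {})
     \<and> (\<forall>i<length P. \<forall>j<length P. i \<noteq> j \<longrightarrow> P ! i \<inter> P ! j = {})
     \<and> \<Union> (set P) = E"

definition k_flower :: "'a set \<Rightarrow> ('a set \<Rightarrow> int) \<Rightarrow> int \<Rightarrow> 'a set set \<Rightarrow> 'a set list \<Rightarrow> bool" where
  "k_flower E lam k T P \<longleftrightarrow> is_partition E P \<and> (\<forall>i<length P. T_strong T (P ! i))
     \<and> (\<forall>i<length P. k_separating E lam k (P ! i)
          \<and> k_separating E lam k (P ! i \<union> P ! (Suc i mod length P)))"

definition displays :: "'a set list \<Rightarrow> 'a set \<Rightarrow> bool" where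
  "displays P X \<longleftrightarrow> (\<exists>I \<subseteq> {..<length P}. X = \<Union> ((!) P ` I))"

definition flower_preceq :: "'a set \<Rightarrow> ('a set \<Rightarrow> int) \<Rightarrow> int \<Rightarrow> 'a set set \<Rightarrow> 'a set set
    \<Rightarrow> 'a set list \<Rightarrow> 'a set list \<Rightarrow> bool" where
  "flower_preceq E lam k T S P1 P2 \<longleftrightarrow>
     (\<forall>X. kS_separation E lam k S X \<and> displays P1 X \<longrightarrow>
        (\<exists>X'. kS_separation E lam k S X' \<and> displays P2 X' \<and> T_equivalent E lam k T X X'))"

definition flower_equivalent :: "'a set \<Rightarrow> ('a set \<Rightarrow> int) \<Rightarrow> int \<Rightarrow> 'a set set \<Rightarrow> 'a set set
    \<Rightarrow> 'a set list \<Rightarrow> 'a set list \<Rightarrow> bool" where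
  "flower_equivalent E lam k T S P1 P2 \<longleftrightarrow>
     flower_preceq E lam k T S P1 P2 \<and> flower_preceq E lam k T S P2 P1"

end

theory Submission
  imports Defs
begin

text \<open>
  Write \<open>F = fcl X\<close> for a member \<open>X\<close> of \<open>S\<close>. Because \<open>E - X\<close> is not sequential, \<open>F \<noteq> E\<close>, and
  then \<open>(X, E - X)\<close> is \<open>T\<close>-equivalent to every \<open>T\<close>-strong \<open>k\<close>-separation \<open>(Y, E - Y)\<close> with
  \<open>X \<subseteq> Y \<subseteq> F\<close>: trivially \<open>fcl Y = F\<close>, and \<open>fcl (E - Y) = fcl (E - X)\<close> because the weak sets
  absorbed into \<open>X\<close> while building \<open>F\<close> are, by submodularity, also absorbed into any fully
  closed set containing \<open>E - F\<close>.
  A \<open>(k,S)\<close>-separation displayed by \<open>\<Phi>\<close> but not by the concatenation \<open>\<Phi>'\<close> has, up to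
  complementation, \<open>P\<^sub>2\<close> on the side \<open>X\<close> and \<open>P\<^sub>1\<close> on the other side. Then \<open>P\<^sub>1 \<subseteq> fcl P\<^sub>2 \<subseteq> F\<close>,
  and \<open>\<lambda> (X \<union> P\<^sub>1) \<le> k\<close> by submodularity, since the strong set \<open>P\<^sub>2\<close> has \<open>\<lambda> P\<^sub>2 \<ge> k\<close>; so
  \<open>X \<union> P\<^sub>1\<close>, which \<open>\<Phi>'\<close> displays, is the required equivalent \<open>(k,S)\<close>-separation.
\<close>

lemma lam_compl: "connectivity_system E lam \<Longrightarrow> X \<subseteq> E \<Longrightarrow> lam (E - X) = lam X"
  unfolding connectivity_system_def by metis

lemma lam_submodular:
  "connectivity_system E lam \<Longrightarrow> X \<subseteq> E \<Longrightarrow> Y \<subseteq> E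
   \<Longrightarrow> lam (X \<union> Y) + lam (X \<inter> Y) \<le> lam X + lam Y"
  unfolding connectivity_system_def by blast

lemma lam_ground: "connectivity_system E lam \<Longrightarrow> lam E = lam {}"
  using lam_compl[of E lam "{}"] by simp

lemma lam_empty_le:
  assumes cs: "connectivity_system E lam" and X: "X \<subseteq> E"
  shows "lam {} \<le> lam X"
proof -
  have "lam (X \<union> (E - X)) + lam (X \<inter> (E - X)) \<le> lam X + lam (E - X)"
    using lam_submodular[OF cs X] by blast
  moreover have "X \<union> (E - X) = E" "X \<inter> (E - X) = {}" using X by auto
  ultimately show ?thesis using lam_compl[OF cs X] lam_ground[OF cs] by simp
qed

lemma T_strong_mono: "T_strong T X \<Longrightarrow> X \<subseteq> Y \<Longrightarrow> T_strong T Y"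
  unfolding T_strong_def T_weak_def by blast

lemma T_weak_mono: "T_weak T Y \<Longrightarrow> X \<subseteq> Y \<Longrightarrow> T_weak T X"
  unfolding T_weak_def by blast

lemma tangle_le_lam_if_strong:
  assumes tg: "tangle E lam k T" and XE: "X \<subseteq> E"
    and sX: "T_strong T X" and sX': "T_strong T (E - X)"
  shows "k \<le> lam X"
proof (rule ccontr)
  assume "\<not> k \<le> lam X"
  then have "X \<in> T \<or> E - X \<in> T" using tg XE unfolding tangle_def by auto
  then show False using sX sX' unfolding T_strong_def T_weak_def by blast
qed

lemma strong_k_separation_compl:
  assumes cs: "connectivity_system E lam" and XE: "X \<subseteq> E"
    and "strong_k_separation E lam k T (E - X)"
  shows "strong_k_separation E lam k T X"
proof -
  have "E - (E - X) = X" using XE by blast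
  then show ?thesis
    using assms lam_compl[OF cs XE] unfolding strong_k_separation_def k_separating_def by auto
qed

lemma fully_closed_subset: "fully_closed E lam k T A \<Longrightarrow> A \<subseteq> E"
  unfolding fully_closed_def k_separating_def by blast

lemma fully_closed_not_k_separating_union:
  "fully_closed E lam k T A \<Longrightarrow> Y \<subseteq> E - A \<Longrightarrow> Y \<noteq> {} \<Longrightarrow> T_weak T Y
   \<Longrightarrow> \<not> k_separating E lam k (A \<union> Y)"
  unfolding fully_closed_def by blast

lemma fully_closed_compl_strong:
  assumes cs: "connectivity_system E lam" and fc: "fully_closed E lam k T A" and ne: "A \<noteq> E"
  shows "T_strong T (E - A)"
proof (rule ccontr)
  assume "\<not> T_strong T (E - A)"
  then have weak: "T_weak T (E - A)" unfolding T_strong_def by simp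
  have AE: "A \<subseteq> E" by (rule fully_closed_subset[OF fc])
  then have "E - A \<noteq> {}" using ne by blast
  then have "\<not> k_separating E lam k (A \<union> (E - A))"
    using fully_closed_not_k_separating_union[OF fc _ _ weak] by blast
  moreover have "lam A \<le> k" using fc unfolding fully_closed_def k_separating_def by blast
  ultimately show False
    using lam_empty_le[OF cs AE] lam_ground[OF cs] AE
    unfolding k_separating_def by (simp add: Un_absorb1)
qed

text \<open>Submodularity on \<open>A\<close> and \<open>Z \<union> W\<close>, together with \<open>\<lambda> (A \<inter> (Z \<union> W)) \<ge> k\<close> (a strong set
  with strong complement), forces \<open>\<lambda> (A \<union> (W - A)) \<le> k\<close>.\<close>

lemma fully_closed_absorbs_weak:
  assumes cs: "connectivity_system E lam" and tg: "tangle E lam k T"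
    and fc: "fully_closed E lam k T A" and ZA: "Z \<subseteq> A" and sZ: "T_strong T Z"
    and wW: "T_weak T W" and WE: "W \<subseteq> E" and lZW: "lam (Z \<union> W) \<le> k"
  shows "W \<subseteq> A"
proof (rule ccontr)
  assume "\<not> W \<subseteq> A"
  then have ne: "W - A \<noteq> {}" by blast
  then have "A \<noteq> E" using WE by blast
  have AE: "A \<subseteq> E" and lA: "lam A \<le> k"
    using fc unfolding fully_closed_def k_separating_def by auto
  define M where "M = A \<inter> (Z \<union> W)"
  have eq: "A \<union> (W - A) = A \<union> (Z \<union> W)" using ZA by blast
  have "Z \<union> W \<subseteq> E" using ZA AE WE by blast
  then have sub: "lam (A \<union> (W - A)) + lam M \<le> lam A + lam (Z \<union> W)"
    unfolding eq M_def by (rule lam_submodular[OF cs AE])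
  have "k \<le> lam M"
  proof (rule tangle_le_lam_if_strong[OF tg])
    show "M \<subseteq> E" using AE unfolding M_def by blast
    show "T_strong T M" unfolding M_def by (rule T_strong_mono[OF sZ]) (use ZA in blast)
    show "T_strong T (E - M)" unfolding M_def
      by (rule T_strong_mono[OF fully_closed_compl_strong[OF cs fc \<open>A \<noteq> E\<close>]]) blast
  qed
  then have "lam (A \<union> (W - A)) \<le> k" using sub lA lZW by linarith
  moreover have "A \<union> (W - A) \<subseteq> E" using AE WE by blast
  ultimately have "k_separating E lam k (A \<union> (W - A))" unfolding k_separating_def by blast
  moreover have "W - A \<subseteq> E - A" using WE by blast
  ultimately show False
    using fully_closed_not_k_separating_union[OF fc _ ne T_weak_mono[OF wW]] by blast
qed

lemma subset_fcl: "X \<subseteq> E \<Longrightarrow> X \<subseteq> fcl E lam k T X"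
  unfolding fcl_def by blast

lemma fcl_least: "fully_closed E lam k T A \<Longrightarrow> X \<subseteq> A \<Longrightarrow> fcl E lam k T X \<subseteq> A"
  unfolding fcl_def by blast

lemma fcl_subset: "fcl E lam k T X \<subseteq> E"
  unfolding fcl_def by blast

lemma subset_fclI:
  "A \<subseteq> E \<Longrightarrow> (\<And>Z. fully_closed E lam k T Z \<Longrightarrow> X \<subseteq> Z \<Longrightarrow> A \<subseteq> Z) \<Longrightarrow> A \<subseteq> fcl E lam k T X"
  unfolding fcl_def by blast

lemma fcl_mono: "X \<subseteq> Y \<Longrightarrow> fcl E lam k T X \<subseteq> fcl E lam k T Y"
  unfolding fcl_def by blast

lemma fcl_eqI:
  assumes "\<And>Z. fully_closed E lam k T Z \<Longrightarrow> X \<subseteq> Z \<longleftrightarrow> Y \<subseteq> Z"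
  shows "fcl E lam k T X = fcl E lam k T Y"
proof -
  have "{Z. fully_closed E lam k T Z \<and> X \<subseteq> Z} = {Z. fully_closed E lam k T Z \<and> Y \<subseteq> Z}"
    using assms by blast
  then show ?thesis unfolding fcl_def by simp
qed

text \<open>A maximal \<open>k\<close>-separating superset of \<open>X\<close> satisfying \<open>Q\<close> is fully closed.\<close>

lemma fully_closed_extension:
  assumes fin: "finite E" and XE: "X \<subseteq> E" and sX: "T_strong T X" and lX: "lam X \<le> k"
    and QX: "Q X"
    and step: "\<And>M Y. X \<subseteq> M \<Longrightarrow> M \<subseteq> E \<Longrightarrow> lam M \<le> k \<Longrightarrow> Q M \<Longrightarrow> Y \<subseteq> E - M \<Longrightarrow> Y \<noteq> {}
      \<Longrightarrow> T_weak T Y \<Longrightarrow> lam (M \<union> Y) \<le> k \<Longrightarrow> Q (M \<union> Y)"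
  shows "\<exists>M. X \<subseteq> M \<and> fully_closed E lam k T M \<and> Q M"
proof -
  define \<M> where "\<M> = {M. X \<subseteq> M \<and> M \<subseteq> E \<and> lam M \<le> k \<and> Q M}"
  have "finite \<M>" using fin by (intro finite_subset[of \<M> "Pow E"]) (auto simp: \<M>_def)
  moreover have "X \<in> \<M>" using XE lX QX unfolding \<M>_def by blast
  ultimately obtain M where M: "M \<in> \<M>" and max: "\<forall>M'\<in>\<M>. M \<subseteq> M' \<longrightarrow> M = M'"
    using finite_has_maximal2 by blast
  have "fully_closed E lam k T M"
    unfolding fully_closed_def k_separating_def
  proof (intro conjI allI impI notI)
    show "M \<subseteq> E" "lam M \<le> k" using M unfolding \<M>_def by auto
    show "T_strong T M" using T_strong_mono[OF sX] M unfolding \<M>_def by blast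
    fix Y assume Y: "Y \<subseteq> E - M" "Y \<noteq> {}" "T_weak T Y" and "M \<union> Y \<subseteq> E \<and> lam (M \<union> Y) \<le> k"
    then have "M \<union> Y \<in> \<M>" using M step unfolding \<M>_def by blast
    then show False using max Y by blast
  qed
  then show ?thesis using M unfolding \<M>_def by blast
qed

lemma fcl_fully_closed:
  assumes cs: "connectivity_system E lam" and tg: "tangle E lam k T"
    and XE: "X \<subseteq> E" and sX: "T_strong T X" and lX: "lam X \<le> k"
  shows "fully_closed E lam k T (fcl E lam k T X)"
proof -
  have fin: "finite E" using cs unfolding connectivity_system_def by blast
  let ?Q = "\<lambda>M. \<forall>A. fully_closed E lam k T A \<and> X \<subseteq> A \<longrightarrow> M \<subseteq> A"
  have "\<exists>M. X \<subseteq> M \<and> fully_closed E lam k T M \<and> ?Q M"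
  proof (rule fully_closed_extension[of E X T lam k, OF fin XE sX lX])
    show "?Q X" by blast
    fix M Y assume M: "X \<subseteq> M" "?Q M" and Y: "Y \<subseteq> E - M" "T_weak T Y" "lam (M \<union> Y) \<le> k"
    show "?Q (M \<union> Y)"
    proof (intro allI impI)
      fix A assume A: "fully_closed E lam k T A \<and> X \<subseteq> A"
      then have "M \<subseteq> A" using M(2) by blast
      moreover have "Y \<subseteq> E" using Y(1) by blast
      then have "Y \<subseteq> A"
        using fully_closed_absorbs_weak[OF cs tg _ \<open>M \<subseteq> A\<close> T_strong_mono[OF sX M(1)] Y(2) _ Y(3)] A
        by simp
      ultimately show "M \<union> Y \<subseteq> A" by (rule Un_least)
    qed
  qed
  then obtain M where M: "X \<subseteq> M" "fully_closed E lam k T M" "?Q M" by blast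
  have "M \<subseteq> fcl E lam k T X"
    using fully_closed_subset[OF M(2)] M(3) by (intro subset_fclI) blast+
  then have "fcl E lam k T X = M" using fcl_least[OF M(2) M(1)] by (rule antisym[rotated])
  then show ?thesis using M(2) by simp
qed

text \<open>The complement of \<open>fcl X\<close> recovers the full closure of \<open>E - X\<close>. Each weak set \<open>Y\<close>
  absorbed into \<open>M\<close> on the way from \<open>X\<close> to \<open>fcl X\<close> is absorbed by every fully closed set
  containing \<open>E - (M \<union> Y)\<close>, since \<open>(E - (M \<union> Y)) \<union> Y = E - M\<close> is \<open>k\<close>-separating.\<close>

lemma compl_subset_if_fcl_compl_subset:
  assumes cs: "connectivity_system E lam" and tg: "tangle E lam k T"
    and XE: "X \<subseteq> E" and sX: "T_strong T X" and lX: "lam X \<le> k"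
    and ne: "fcl E lam k T X \<noteq> E"
    and fcZ: "fully_closed E lam k T Z" and FZ: "E - fcl E lam k T X \<subseteq> Z"
  shows "E - X \<subseteq> Z"
proof -
  define F where "F = fcl E lam k T X"
  have fin: "finite E" using cs unfolding connectivity_system_def by blast
  have fcF: "fully_closed E lam k T F" unfolding F_def by (rule fcl_fully_closed[OF cs tg XE sX lX])
  have sF: "T_strong T (E - F)" using fully_closed_compl_strong[OF cs fcF] ne F_def by simp
  let ?Q = "\<lambda>M. M \<subseteq> F \<and> (\<forall>Z. fully_closed E lam k T Z \<and> E - M \<subseteq> Z \<longrightarrow> E - X \<subseteq> Z)"
  have "\<exists>M. X \<subseteq> M \<and> fully_closed E lam k T M \<and> ?Q M"
  proof (rule fully_closed_extension[of E X T lam k, OF fin XE sX lX])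
    show "?Q X" using subset_fcl[OF XE] F_def by blast
    fix M Y assume M: "X \<subseteq> M" "M \<subseteq> E" "lam M \<le> k" "?Q M"
      and Y: "Y \<subseteq> E - M" "T_weak T Y" "lam (M \<union> Y) \<le> k"
    have YE: "Y \<subseteq> E" using Y by blast
    have MF: "M \<subseteq> F" using M(4) by blast
    have YF: "Y \<subseteq> F"
      by (rule fully_closed_absorbs_weak[OF cs tg fcF MF T_strong_mono[OF sX M(1)] Y(2) YE Y(3)])
    have "E - X \<subseteq> Z" if fcZ: "fully_closed E lam k T Z" and MYZ: "E - (M \<union> Y) \<subseteq> Z" for Z
    proof -
      have "T_strong T (E - (M \<union> Y))" by (rule T_strong_mono[OF sF]) (use MF YF in blast)
      moreover have "lam ((E - (M \<union> Y)) \<union> Y) \<le> k"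
      proof -
        have "(E - (M \<union> Y)) \<union> Y = E - M" using Y by blast
        then show ?thesis using lam_compl[OF cs M(2)] M(3) by simp
      qed
      ultimately have "Y \<subseteq> Z" by (rule fully_closed_absorbs_weak[OF cs tg fcZ MYZ _ Y(2) YE])
      then have "E - M \<subseteq> Z" using MYZ by blast
      then show ?thesis using M(4) fcZ by blast
    qed
    then show "?Q (M \<union> Y)" using MF YF by blast
  qed
  then obtain M where M: "X \<subseteq> M" "fully_closed E lam k T M" "?Q M" by blast
  have "F \<subseteq> M" unfolding F_def by (rule fcl_least[OF M(2) M(1)])
  then have "M = F" using M(3) by blast
  then show ?thesis using M(3) fcZ FZ F_def by blast
qed

lemma T_equivalent_if_subset_fcl:
  assumes cs: "connectivity_system E lam" and tg: "tangle E lam k T"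
    and X: "strong_k_separation E lam k T X" and ne: "fcl E lam k T X \<noteq> E"
    and XY: "X \<subseteq> Y" and YF: "Y \<subseteq> fcl E lam k T X" and lY: "lam Y \<le> k"
  shows "T_equivalent E lam k T X Y"
proof -
  have XE: "X \<subseteq> E" and sX: "T_strong T X" and lX: "lam X \<le> k"
    using X unfolding strong_k_separation_def k_separating_def by auto
  have fcF: "fully_closed E lam k T (fcl E lam k T X)" by (rule fcl_fully_closed[OF cs tg XE sX lX])
  have "T_strong T (E - Y)"
    by (rule T_strong_mono[OF fully_closed_compl_strong[OF cs fcF ne]]) (use YF in blast)
  moreover have "T_strong T Y" by (rule T_strong_mono[OF sX XY])
  moreover have "Y \<subseteq> E" using YF fcl_subset[of E lam k T X] by blast
  ultimately have Y: "strong_k_separation E lam k T Y"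
    using lY unfolding strong_k_separation_def k_separating_def by blast
  have "fcl E lam k T Y = fcl E lam k T X"
    using XY YF fcl_least by (intro fcl_eqI) blast
  moreover have "fcl E lam k T (E - Y) = fcl E lam k T (E - X)"
  proof (rule fcl_eqI)
    fix Z assume "fully_closed E lam k T Z"
    then show "E - Y \<subseteq> Z \<longleftrightarrow> E - X \<subseteq> Z"
      using compl_subset_if_fcl_compl_subset[OF cs tg XE sX lX ne] XY YF by blast
  qed
  ultimately show ?thesis using X Y unfolding T_equivalent_def by simp
qed

lemma T_equivalent_refl: "strong_k_separation E lam k T X \<Longrightarrow> T_equivalent E lam k T X X"
  unfolding T_equivalent_def by blast

lemma T_equivalent_sym: "T_equivalent E lam k T X Y \<Longrightarrow> T_equivalent E lam k T Y X"
  unfolding T_equivalent_def by auto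

lemma T_equivalent_compl_left:
  assumes cs: "connectivity_system E lam" and XE: "X \<subseteq> E"
    and eq: "T_equivalent E lam k T (E - X) Y"
  shows "T_equivalent E lam k T X Y"
proof -
  have "E - (E - X) = X" using XE by blast
  moreover have "strong_k_separation E lam k T X"
    using strong_k_separation_compl[OF cs XE] eq unfolding T_equivalent_def by blast
  ultimately show ?thesis using eq unfolding T_equivalent_def by auto
qed

lemma strong_k_separation_if_kS_separation:
  assumes "admissible_S E lam k T S" and "kS_separation E lam k S X"
  shows "strong_k_separation E lam k T X"
proof -
  have "X \<subseteq> E" using assms(2) unfolding kS_separation_def k_separating_def by blast
  then have "E - (E - X) = X" by blast
  then show ?thesis
    using assms unfolding admissible_S_def kS_separation_def strong_k_separation_def by metis
qed

lemma kS_separation_compl: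
  assumes cs: "connectivity_system E lam" and "kS_separation E lam k S X"
  shows "kS_separation E lam k S (E - X)"
proof -
  have XE: "X \<subseteq> E" using assms(2) unfolding kS_separation_def k_separating_def by blast
  then have "E - (E - X) = X" by blast
  then show ?thesis
    using assms lam_compl[OF cs XE] unfolding kS_separation_def k_separating_def by auto
qed

lemma kS_separation_if_T_equivalent:
  assumes "tree_compatible E lam k T S" and "kS_separation E lam k S X"
    and "T_equivalent E lam k T X X'"
  shows "kS_separation E lam k S X'"
proof -
  have "strong_k_separation E lam k T X'" using assms(3) unfolding T_equivalent_def by blast
  then show ?thesis
    using assms(1,2) T_equivalent_sym[OF assms(3)] unfolding tree_compatible_def by (elim conjE) blast
qed

lemma fcl_ne_if_compl_in_S:
  assumes "admissible_S E lam k T S" and "X \<subseteq> E" and "E - X \<in> S"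
  shows "fcl E lam k T X \<noteq> E"
proof -
  have "E - (E - X) = X" using assms(2) by blast
  then show ?thesis using assms unfolding admissible_S_def T_sequential_def by metis
qed

lemma kS_separation_union_if_subset_fcl:
  assumes cs: "connectivity_system E lam" and tg: "tangle E lam k T"
    and tc: "tree_compatible E lam k T S" and kS: "kS_separation E lam k S X"
    and P1E: "P1 \<subseteq> E" and P2E: "P2 \<subseteq> E" and disj: "P1 \<inter> X = {}" and P2X: "P2 \<subseteq> X"
    and sP2: "T_strong T P2" and l12: "lam (P1 \<union> P2) \<le> k"
    and P1cl: "P1 \<subseteq> fcl E lam k T P2"
  shows "kS_separation E lam k S (X \<union> P1) \<and> T_equivalent E lam k T X (X \<union> P1)"
proof -
  have adm: "admissible_S E lam k T S" using tc unfolding tree_compatible_def by blast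
  have X: "strong_k_separation E lam k T X"
    by (rule strong_k_separation_if_kS_separation[OF adm kS])
  have XE: "X \<subseteq> E" and lX: "lam X \<le> k"
    using kS unfolding kS_separation_def k_separating_def by auto
  have ne: "fcl E lam k T X \<noteq> E"
    using fcl_ne_if_compl_in_S[OF adm XE] kS unfolding kS_separation_def by blast
  have "fully_closed E lam k T (fcl E lam k T X)"
    using fcl_fully_closed[OF cs tg XE _ lX] X unfolding strong_k_separation_def by blast
  then have sF: "T_strong T (E - fcl E lam k T X)" by (rule fully_closed_compl_strong[OF cs _ ne])
  have P12E: "P1 \<union> P2 \<subseteq> E" using P1E P2E by blast
  have "k \<le> lam P2"
  proof (rule tangle_le_lam_if_strong[OF tg P2E sP2])
    show "T_strong T (E - P2)" by (rule T_strong_mono[OF sF]) (use P2X subset_fcl[OF XE] in blast)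
  qed
  moreover have "lam (X \<union> (P1 \<union> P2)) + lam (X \<inter> (P1 \<union> P2)) \<le> lam X + lam (P1 \<union> P2)"
    by (rule lam_submodular[OF cs XE P12E])
  moreover have "X \<union> (P1 \<union> P2) = X \<union> P1" "X \<inter> (P1 \<union> P2) = P2" using disj P2X by auto
  ultimately have "lam (X \<union> P1) \<le> k" using lX l12 by simp
  moreover have "X \<union> P1 \<subseteq> fcl E lam k T X"
    using P1cl fcl_mono[OF P2X] subset_fcl[OF XE] by blast
  ultimately have eq: "T_equivalent E lam k T X (X \<union> P1)"
    by (intro T_equivalent_if_subset_fcl[OF cs tg X ne]) auto
  then show ?thesis using kS_separation_if_T_equivalent[OF tc kS] by blast
qed

lemma is_partition_compl_union:
  assumes p: "is_partition E P" and I: "I \<subseteq> {..<length P}"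
  shows "E - \<Union> ((!) P ` I) = \<Union> ((!) P ` ({..<length P} - I))"
proof -
  have "set P = (!) P ` {..<length P}" by (auto simp: set_conv_nth)
  then have "E = \<Union> ((!) P ` {..<length P})" using p unfolding is_partition_def by simp
  moreover have "P ! i \<inter> P ! j = {}" if "i < length P" "j < length P" "i \<noteq> j" for i j
    using p that unfolding is_partition_def by blast
  ultimately show ?thesis using I by blast
qed

text \<open>In the concatenation \<open>\<Phi>'\<close>, petal \<open>j\<close> is the union of the petals \<open>i\<close> of \<open>\<Phi>\<close> with
  \<open>i - 1 = j\<close> (truncated subtraction merges \<open>0\<close> and \<open>1\<close>).\<close>

lemma concat_nth:
  assumes n: "length P \<ge> 2" and j: "j < length P - 1"
  shows "((P ! 0 \<union> P ! 1) # drop 2 P) ! j = \<Union> ((!) P ` {i. i < length P \<and> i - 1 = j})"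
proof (cases j)
  case 0
  then have "{i. i < length P \<and> i - 1 = j} = {0, 1}" using n by auto
  then show ?thesis using 0 by simp
next
  case (Suc m)
  then have "{i. i < length P \<and> i - 1 = j} = {Suc j}" using j by auto
  then show ?thesis using Suc j by (simp add: nth_drop)
qed

lemma concat_union:
  assumes n: "length P \<ge> 2" and J: "J \<subseteq> {..<length P - 1}"
  shows "\<Union> ((!) ((P ! 0 \<union> P ! 1) # drop 2 P) ` J) = \<Union> ((!) P ` {i. i < length P \<and> i - 1 \<in> J})"
proof -
  have "\<Union> ((!) ((P ! 0 \<union> P ! 1) # drop 2 P) ` J)
      = (\<Union>j\<in>J. \<Union> ((!) P ` {i. i < length P \<and> i - 1 = j}))"
    using J concat_nth[OF n] by (intro SUP_cong) auto
  also have "\<dots> = \<Union> ((!) P ` {i. i < length P \<and> i - 1 \<in> J})" by blast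
  finally show ?thesis .
qed

lemma displays_if_displays_concat:
  assumes n: "length P \<ge> 2" and "displays ((P ! 0 \<union> P ! 1) # drop 2 P) X"
  shows "displays P X"
proof -
  have "length ((P ! 0 \<union> P ! 1) # drop 2 P) = length P - 1" using n by simp
  then obtain J where J: "J \<subseteq> {..<length P - 1}"
      and X: "X = \<Union> ((!) ((P ! 0 \<union> P ! 1) # drop 2 P) ` J)"
    using assms(2) unfolding displays_def by metis
  then show ?thesis
    unfolding displays_def concat_union[OF n J] by (intro exI[of _ "{i. i < length P \<and> i - 1 \<in> J}"]) auto
qed

lemma displays_concat:
  assumes n: "length P \<ge> 2" and I: "I \<subseteq> {..<length P}" and I01: "0 \<in> I \<longleftrightarrow> 1 \<in> I"
  shows "displays ((P ! 0 \<union> P ! 1) # drop 2 P) (\<Union> ((!) P ` I))"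
proof -
  define J where "J = (\<lambda>i. i - 1) ` I"
  have J: "J \<subseteq> {..<length P - 1}" using I n unfolding J_def by auto
  have "{i. i < length P \<and> i - 1 \<in> J} = I"
  proof (intro set_eqI iffI)
    fix i assume "i \<in> {i. i < length P \<and> i - 1 \<in> J}"
    then obtain i' where i': "i' \<in> I" "i - 1 = i' - 1" unfolding J_def by blast
    then have "i = i' \<or> i \<in> {0, 1} \<and> i' \<in> {0, 1}" by auto
    then show "i \<in> I" using i'(1) I01 by blast
  qed (use I J_def in auto)
  then show ?thesis
    using concat_union[OF n J] J n unfolding displays_def by (intro exI[of _ J]) auto
qed

lemma flower_preceq_concat_flower:
  assumes adm: "admissible_S E lam k T S" and n: "length P \<ge> 2"
  shows "flower_preceq E lam k T S ((P ! 0 \<union> P ! 1) # drop 2 P) P"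
  unfolding flower_preceq_def
  using displays_if_displays_concat[OF n] T_equivalent_refl
    strong_k_separation_if_kS_separation[OF adm] by blast

lemma kS_separation_concat_equivalent:
  assumes cs: "connectivity_system E lam" and tg: "tangle E lam k T"
    and tc: "tree_compatible E lam k T S" and n: "length P \<ge> 2"
    and fl: "k_flower E lam k T P" and cl: "P ! 0 \<subseteq> fcl E lam k T (P ! 1)"
    and kS: "kS_separation E lam k S X" and I: "I \<subseteq> {..<length P}"
    and XI: "X = \<Union> ((!) P ` I)" and i0: "0 \<notin> I" and i1: "1 \<in> I"
  shows "\<exists>X'. kS_separation E lam k S X' \<and> displays ((P ! 0 \<union> P ! 1) # drop 2 P) X'
     \<and> T_equivalent E lam k T X X'"
proof -
  have part: "is_partition E P" and petals: "\<And>i. i < length P \<Longrightarrow>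
      T_strong T (P ! i) \<and> P ! i \<subseteq> E \<and> lam (P ! i \<union> P ! (Suc i mod length P)) \<le> k"
    using fl unfolding k_flower_def k_separating_def by auto
  have "0 < length P" "1 < length P" using n by auto
  then have P0: "P ! 0 \<subseteq> E" "lam (P ! 0 \<union> P ! (Suc 0 mod length P)) \<le> k"
      and P1: "P ! 1 \<subseteq> E" "T_strong T (P ! 1)"
    using petals by blast+
  moreover have "Suc 0 mod length P = 1" using n by simp
  ultimately have l01: "lam (P ! 0 \<union> P ! 1) \<le> k" by (simp only:)
  have "P ! 0 \<subseteq> E - X"
    using is_partition_compl_union[OF part I] XI i0 \<open>0 < length P\<close> by auto
  then have "P ! 0 \<inter> X = {}" by blast
  moreover have "P ! 1 \<subseteq> X" using XI i1 by blast
  ultimately have "kS_separation E lam k S (X \<union> P ! 0) \<and> T_equivalent E lam k T X (X \<union> P ! 0)"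
    using kS_separation_union_if_subset_fcl[OF cs tg tc kS P0(1) P1(1) _ _ P1(2) l01 cl] by blast
  moreover have "X \<union> P ! 0 = \<Union> ((!) P ` insert 0 I)" using XI by auto
  moreover have "displays ((P ! 0 \<union> P ! 1) # drop 2 P) (\<Union> ((!) P ` insert 0 I))"
    by (rule displays_concat[OF n]) (use I i1 \<open>0 < length P\<close> in auto)
  ultimately show ?thesis by metis
qed

lemma flower_preceq_flower_concat:
  assumes cs: "connectivity_system E lam" and tg: "tangle E lam k T"
    and tc: "tree_compatible E lam k T S" and n: "length P \<ge> 2"
    and fl: "k_flower E lam k T P" and cl: "P ! 0 \<subseteq> fcl E lam k T (P ! 1)"
  shows "flower_preceq E lam k T S P ((P ! 0 \<union> P ! 1) # drop 2 P)"
  unfolding flower_preceq_def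
proof (intro allI impI, elim conjE)
  fix X assume kS: "kS_separation E lam k S X" and "displays P X"
  then obtain I where I: "I \<subseteq> {..<length P}" and XI: "X = \<Union> ((!) P ` I)"
    unfolding displays_def by blast
  have adm: "admissible_S E lam k T S" using tc unfolding tree_compatible_def by blast
  have XE: "X \<subseteq> E" using kS unfolding kS_separation_def k_separating_def by blast
  note concat_equivalent = kS_separation_concat_equivalent[OF cs tg tc n fl cl]
  consider "0 \<in> I \<longleftrightarrow> 1 \<in> I" | "0 \<notin> I" "1 \<in> I" | "0 \<in> I" "1 \<notin> I" by blast
  then show "\<exists>X'. kS_separation E lam k S X' \<and> displays ((P ! 0 \<union> P ! 1) # drop 2 P) X'
      \<and> T_equivalent E lam k T X X'"
  proof cases
    case 1
    then show ?thesis using displays_concat[OF n I] XI kS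
        T_equivalent_refl[OF strong_k_separation_if_kS_separation[OF adm kS]] by blast
  next
    case 2
    then show ?thesis using concat_equivalent[OF kS I XI] by blast
  next
    case 3
    have "is_partition E P" using fl unfolding k_flower_def by blast
    then have "E - X = \<Union> ((!) P ` ({..<length P} - I))"
      using is_partition_compl_union[OF _ I] XI by blast
    moreover have "{..<length P} - I \<subseteq> {..<length P}" "0 \<notin> {..<length P} - I"
      "1 \<in> {..<length P} - I"
      using 3 n by auto
    ultimately obtain X' where "kS_separation E lam k S X'"
        "displays ((P ! 0 \<union> P ! 1) # drop 2 P) X'" "T_equivalent E lam k T (E - X) X'"
      using concat_equivalent[OF kS_separation_compl[OF cs kS]] by blast
    then show ?thesis using T_equivalent_compl_left[OF cs XE] by blast
  qed
qed

theorem lemma4p3: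
  fixes E :: "'a set" and lam :: "'a set \<Rightarrow> int" and k :: int
    and T :: "'a set set" and S :: "'a set set" and P :: "'a set list"
  assumes "connectivity_system E lam"
    and "tangle E lam k T"
    and "tree_compatible E lam k T S"
    and "length P \<ge> 2"
    and "k_flower E lam k T P"
    and "P ! 0 \<subseteq> fcl E lam k T (P ! 1)"
  shows "flower_equivalent E lam k T S ((P ! 0 \<union> P ! 1) # drop 2 P) P"
proof -
  have "admissible_S E lam k T S" using assms(3) unfolding tree_compatible_def by blast
  then show ?thesis
    unfolding flower_equivalent_def
    using flower_preceq_concat_flower flower_preceq_flower_concat assms by blast
qed

end
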